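(* Let $t>0$ and $\tau=t/2\pi\ge648$. Then \[ \Bigl|\sum_{n\le(t/2\pi)^{1/2}}\frac{1}{n^{1/2+it}}\Bigr|\le 1.89725\,\tau^{1/6}\log\tau+9.89044\,\tau^{1/6}. \]
   Context: The sum runs over positive integers $n$. *)

theory Defs
  imports "HOL-Analysis.Analysis"
begin

end

theory Submission
  imports Defs
begin

(*
  Write s = t^(1/3) and split the sum at m = ceiling (64 s). The initial segment is bounded
  trivially by 2 sqrt m. The rest is cut into dyadic blocks (M, 2M]; partial summation removes
  the weight n^(-1/2) at the cost of a factor M^(-1/2), and the sum of n^(-it) over a block is
  bounded by van der Corput's inequality with differencing length H = floor (M / s). The
  differenced phases t (log (n + h) - log n) have second differences between t h / (4 M^3) and
  2 t h / M^3, so the discrete second-derivative test, obtained from the Kusmin-Landau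
  first-derivative test by sorting the first differences modulo 2 pi, bounds each correlation
  sum by 9 s. This gives 5 sqrt s per block, and there are at most log tau / 4 - 5 blocks.
  The argument needs s >= 1000; for tau <= 2^60 the trivial bound 2 tau^(1/4) already suffices.
*)

section \<open>The Kusmin-Landau first-derivative test\<close>

definition forward_diff :: "(nat \<Rightarrow> real) \<Rightarrow> nat \<Rightarrow> real" where
  "forward_diff u n = u (Suc n) - u n"

lemma sin_ge_half_self:
  fixes x :: real
  assumes "0 \<le> x" "x \<le> 1"
  shows "x/2 \<le> sin x"
proof (cases "x = 0")
  case False
  then have "0 < x" using assms by simp
  have "\<exists>z. 0 < z \<and> z < x \<and> (sin x - x/2) - (sin 0 - 0/2) = (x - 0) * (cos z - 1/2)"
    by (rule MVT2[OF \<open>0 < x\<close>]) (auto intro!: derivative_eq_intros)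
  then obtain z where z: "0 < z" "z < x" "sin x - x/2 = x * (cos z - 1/2)"
    by auto
  have "cos (pi/3) \<le> cos z"
    using z assms pi_gt3 by (intro cos_monotone_0_pi_le) auto
  then have "0 \<le> x * (cos z - 1/2)" using \<open>0 < x\<close> by (simp add: cos_60)
  then show ?thesis using z by simp
qed simp

lemma sin_ge_quarter_margin:
  fixes \<eta> \<theta> :: real
  assumes "0 < \<eta>" "\<eta> \<le> 1" "\<eta>/2 \<le> \<theta>" "\<theta> \<le> pi - \<eta>/2"
  shows "\<eta>/4 \<le> sin \<theta>"
proof -
  have "\<eta>/4 \<le> sin (\<eta>/2)" using sin_ge_half_self[of "\<eta>/2"] assms by simp
  also have "\<dots> \<le> sin \<theta>"
  proof (cases "\<theta> \<le> pi/2")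
    case True
    then show ?thesis using assms by (intro sin_monotone_2pi_le) auto
  next
    case False
    have "sin (\<eta>/2) \<le> sin (pi - \<theta>)" using assms False by (intro sin_monotone_2pi_le) auto
    then show ?thesis by simp
  qed
  finally show ?thesis .
qed

lemma cot_antimono:
  fixes x y :: real
  assumes "0 < x" "x \<le> y" "y < pi"
  shows "cot y \<le> cot x"
proof -
  have "0 < sin x" "0 < sin y" using assms by (auto intro!: sin_gt_zero)
  moreover have "0 \<le> sin (y - x)" using assms by (intro sin_ge_zero) auto
  ultimately show ?thesis by (simp add: cot_def sin_diff divide_simps mult.commute)
qed

lemma cis_double_sub_one_inverse:
  fixes \<theta> :: real
  assumes "sin \<theta> \<noteq> 0"
  shows "- (1 + \<i> * of_real (cot \<theta>)) / 2 * (cis (2 * \<theta>) - 1) = 1"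
proof -
  have "sin (2 * \<theta>) = 2 * sin \<theta> * cos \<theta>" "cos (2 * \<theta>) = (cos \<theta>)\<^sup>2 - (sin \<theta>)\<^sup>2"
    by (rule sin_double cos_double)+
  then show ?thesis
    unfolding cis.code complex_eq_iff cot_def using assms
    by (simp add: field_simps power2_eq_square) (use sin_cos_squared_add[of \<theta>] in algebra)
qed

lemma norm_one_plus_i_cot_le:
  fixes \<eta> \<theta> :: real
  assumes "0 < \<eta>" "\<eta>/4 \<le> sin \<theta>"
  shows "cmod (1 + \<i> * of_real (cot \<theta>)) \<le> 4/\<eta>"
proof -
  have "0 < sin \<theta>" using assms by linarith
  have "(cmod (1 + \<i> * of_real (cot \<theta>)))\<^sup>2 = 1 + (cot \<theta>)\<^sup>2"
    by (simp add: cmod_power2)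
  also have "\<dots> = (1 / sin \<theta>)\<^sup>2"
    using \<open>0 < sin \<theta>\<close> sin_cos_squared_add[of \<theta>] by (simp add: cot_def field_simps)
  finally have "cmod (1 + \<i> * of_real (cot \<theta>)) = 1 / sin \<theta>"
    using \<open>0 < sin \<theta>\<close> by (simp add: power2_eq_iff_nonneg)
  also have "\<dots> \<le> 1 / (\<eta>/4)"
    using assms by (intro divide_left_mono) auto
  finally show ?thesis by simp
qed

lemma sum_by_parts:
  fixes c w :: "nat \<Rightarrow> 'a::comm_ring"
  assumes "a \<le> b"
  shows "(\<Sum>n=a..b. c n * (w (Suc n) - w n))
       = c b * w (Suc b) - c a * w a - (\<Sum>n=a..<b. (c (Suc n) - c n) * w (Suc n))"
  using assms
proof (induction b rule: dec_induct)
  case (step n)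
  then show ?case by (simp add: algebra_simps)
qed (simp add: algebra_simps)

lemma norm_sum_le_by_parts:
  fixes c w :: "nat \<Rightarrow> 'a::real_normed_field"
  assumes "a \<le> b" and w_eq: "\<And>n. a \<le> n \<Longrightarrow> n \<le> b \<Longrightarrow> w n = c n * (w (Suc n) - w n)"
    and w_le: "\<And>n. norm (w n) \<le> 1"
  shows "norm (\<Sum>n=a..b. w n) \<le> norm (c a) + norm (c b) + (\<Sum>n=a..<b. norm (c (Suc n) - c n))"
proof -
  have "(\<Sum>n=a..b. w n) = (\<Sum>n=a..b. c n * (w (Suc n) - w n))"
    using w_eq by (intro sum.cong) auto
  also have "\<dots> = c b * w (Suc b) - c a * w a - (\<Sum>n=a..<b. (c (Suc n) - c n) * w (Suc n))"
    using \<open>a \<le> b\<close> by (rule sum_by_parts)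
  finally have "norm (\<Sum>n=a..b. w n)
      \<le> norm (c b * w (Suc b)) + norm (c a * w a) + norm (\<Sum>n=a..<b. (c (Suc n) - c n) * w (Suc n))"
    by (simp add: order_trans[OF norm_triangle_ineq4 add_right_mono[OF norm_triangle_ineq4]])
  also have "\<dots> \<le> norm (c b) + norm (c a) + (\<Sum>n=a..<b. norm (c (Suc n) - c n))"
    using w_le
    by (intro add_mono order_trans[OF norm_sum sum_mono]) (auto simp: norm_mult intro: mult_left_le)
  finally show ?thesis by simp
qed

(* With c n = -(1 + i cot (theta n)) / 2 one has w n = c n * (w (n + 1) - w n); after summation
   by parts only c a, c b and the variation of the monotone sequence cot (theta n) remain. *)
lemma kusmin_landau_angles:
  fixes w :: "nat \<Rightarrow> complex" and \<theta> :: "nat \<Rightarrow> real"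
  assumes "a \<le> b" and \<eta>: "0 < \<eta>" "\<eta> \<le> 1"
    and range: "\<And>n. a \<le> n \<Longrightarrow> n \<le> b \<Longrightarrow> \<eta>/2 \<le> \<theta> n \<and> \<theta> n \<le> pi - \<eta>/2"
    and mono: "\<And>n. a \<le> n \<Longrightarrow> n < b \<Longrightarrow> \<theta> n \<le> \<theta> (Suc n)"
    and rotate: "\<And>n. a \<le> n \<Longrightarrow> n \<le> b \<Longrightarrow> w (Suc n) = w n * cis (2 * \<theta> n)"
    and unit: "\<And>n. cmod (w n) \<le> 1"
  shows "cmod (\<Sum>n=a..b. w n) \<le> 8/\<eta>"
proof -
  have sin_\<theta>: "\<eta>/4 \<le> sin (\<theta> n)" if "a \<le> n" "n \<le> b" for n
    using range[OF that] \<eta> by (intro sin_ge_quarter_margin) auto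
  define c where "c n = - (1 + \<i> * of_real (cot (\<theta> n))) / 2" for n
  have w_eq: "w n = c n * (w (Suc n) - w n)" if "a \<le> n" "n \<le> b" for n
  proof -
    have "c n * (cis (2 * \<theta> n) - 1) = 1"
      unfolding c_def using sin_\<theta>[OF that] \<eta> by (intro cis_double_sub_one_inverse) auto
    moreover have "c n * (w (Suc n) - w n) = w n * (c n * (cis (2 * \<theta> n) - 1))"
      using rotate[OF that] by (simp add: algebra_simps)
    ultimately show ?thesis by simp
  qed
  have cot_bound: "cmod (1 + \<i> * of_real (cot (\<theta> n))) \<le> 4/\<eta>" if "a \<le> n" "n \<le> b" for n
    using \<open>0 < \<eta>\<close> sin_\<theta>[OF that] by (rule norm_one_plus_i_cot_le)
  have norm_c_diff: "cmod (c (Suc n) - c n) = (cot (\<theta> n) - cot (\<theta> (Suc n))) / 2"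
    if "a \<le> n" "n < b" for n
  proof -
    have "cot (\<theta> (Suc n)) \<le> cot (\<theta> n)"
      using range[of n] range[of "Suc n"] mono[OF that] that \<eta> by (intro cot_antimono) auto
    moreover have "c (Suc n) - c n = - \<i> * of_real ((cot (\<theta> (Suc n)) - cot (\<theta> n)) / 2)"
      by (simp add: c_def algebra_simps diff_divide_distrib)
    ultimately show ?thesis by (simp add: norm_mult norm_divide flip: of_real_diff)
  qed
  have "cmod (\<Sum>n=a..b. w n) \<le> cmod (c a) + cmod (c b) + (\<Sum>n=a..<b. cmod (c (Suc n) - c n))"
    using \<open>a \<le> b\<close> w_eq unit by (rule norm_sum_le_by_parts)
  also have "(\<Sum>n=a..<b. cmod (c (Suc n) - c n)) = (cot (\<theta> a) - cot (\<theta> b)) / 2"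
    using norm_c_diff sum_Suc_diff'[OF \<open>a \<le> b\<close>, of "\<lambda>n. - cot (\<theta> n) / 2"]
    by (simp add: diff_divide_distrib)
  also have "cmod (c a) + cmod (c b) + (cot (\<theta> a) - cot (\<theta> b)) / 2 \<le> 4/\<eta> + 4/\<eta>"
  proof -
    have norm_c: "cmod (c n) = cmod (1 + \<i> * of_real (cot (\<theta> n))) / 2" for n
      unfolding c_def norm_divide norm_minus_cancel by simp
    have half_sum_le: "A/2 + B/2 + (x - y)/2 \<le> A + B" if "x \<le> A" "- y \<le> B" for A B x y :: real
      using that by (simp add: field_simps)
    have abs_cot: "\<bar>cot (\<theta> n)\<bar> \<le> cmod (1 + \<i> * of_real (cot (\<theta> n)))" for n
      using abs_Im_le_cmod[of "1 + \<i> * of_real (cot (\<theta> n))"] by simp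
    have "cmod (c a) + cmod (c b) + (cot (\<theta> a) - cot (\<theta> b)) / 2
        \<le> cmod (1 + \<i> * of_real (cot (\<theta> a))) + cmod (1 + \<i> * of_real (cot (\<theta> b)))"
      unfolding norm_c using abs_le_D1[OF abs_cot[of a]] abs_le_D2[OF abs_cot[of b]]
      by (rule half_sum_le[where A = "cmod _" and B = "cmod _"])
    also have "\<dots> \<le> 4/\<eta> + 4/\<eta>"
      using cot_bound[OF order_refl \<open>a \<le> b\<close>] cot_bound[OF \<open>a \<le> b\<close> order_refl] by (rule add_mono)
    finally show ?thesis .
  qed
  finally show ?thesis by simp
qed

lemma kusmin_landau:
  fixes u :: "nat \<Rightarrow> real" and k :: int
  assumes "a \<le> b" "0 < \<eta>" "\<eta> \<le> 1"
    and range: "\<And>n. a \<le> n \<Longrightarrow> n \<le> b \<Longrightarrow>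
      2*pi*k + \<eta> \<le> forward_diff u n \<and> forward_diff u n \<le> 2*pi*k + 2*pi - \<eta>"
    and mono: "\<And>n. a \<le> n \<Longrightarrow> n < b \<Longrightarrow> forward_diff u n \<le> forward_diff u (Suc n)"
  shows "cmod (\<Sum>n=a..b. cis (u n)) \<le> 8/\<eta>"
proof (rule kusmin_landau_angles[where \<theta> = "\<lambda>n. (forward_diff u n - 2*pi*k) / 2"])
  show "cis (u (Suc n)) = cis (u n) * cis (2 * ((forward_diff u n - 2*pi*k) / 2))" for n
  proof -
    have "u (Suc n) = u n + 2 * ((forward_diff u n - 2*pi*k) / 2) + 2*pi*k"
      by (simp add: forward_diff_def field_simps)
    then show ?thesis by (simp flip: cis_mult)
  qed
  show "\<eta>/2 \<le> (forward_diff u n - 2*pi*k) / 2 \<and> (forward_diff u n - 2*pi*k) / 2 \<le> pi - \<eta>/2"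
    if "a \<le> n" "n \<le> b" for n
    using range[OF that] by (simp add: field_simps)
  show "(forward_diff u n - 2*pi*k) / 2 \<le> (forward_diff u (Suc n) - 2*pi*k) / 2"
    if "a \<le> n" "n < b" for n
    using mono[OF that] by simp
qed (use assms in auto)

section \<open>The second-derivative test\<close>

lemma increment_bounds_of_forward_diff:
  fixes g :: "nat \<Rightarrow> real"
  assumes "n \<le> m" and bounds: "\<And>j. n \<le> j \<Longrightarrow> j < m \<Longrightarrow> lo \<le> forward_diff g j \<and> forward_diff g j \<le> hi"
  shows "real (m - n) * lo \<le> g m - g n \<and> g m - g n \<le> real (m - n) * hi"
proof -
  have "g m - g n = (\<Sum>j=n..<m. forward_diff g j)"
    using sum_Suc_diff'[OF \<open>n \<le> m\<close>, of g] by (simp add: forward_diff_def)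
  then show ?thesis
    using sum_bounded_below[of "{n..<m}" lo "forward_diff g"]
      sum_bounded_above[of "{n..<m}" "forward_diff g" hi] bounds
    by auto
qed

lemma card_le_of_spread:
  fixes D :: "nat \<Rightarrow> real" and S :: "nat set"
  assumes "finite S" "0 < lo" "0 \<le> L"
    and spread: "\<And>n m. n \<in> S \<Longrightarrow> m \<in> S \<Longrightarrow> n \<le> m \<Longrightarrow> real (m - n) * lo \<le> D m - D n"
    and range: "\<And>n. n \<in> S \<Longrightarrow> c \<le> D n \<and> D n < c + L"
  shows "real (card S) \<le> L / lo + 1"
proof (cases "S = {}")
  case False
  define n\<^sub>0 where "n\<^sub>0 = Min S"
  have "n\<^sub>0 \<in> S" using False \<open>finite S\<close> by (simp add: n\<^sub>0_def)
  have "S \<subseteq> {n\<^sub>0..<n\<^sub>0 + nat \<lceil>L / lo\<rceil>}"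
  proof
    fix n assume "n \<in> S"
    then have "n\<^sub>0 \<le> n" using \<open>finite S\<close> by (simp add: n\<^sub>0_def)
    have "real (n - n\<^sub>0) * lo < L"
      using spread[OF \<open>n\<^sub>0 \<in> S\<close> \<open>n \<in> S\<close> \<open>n\<^sub>0 \<le> n\<close>] range[OF \<open>n \<in> S\<close>] range[OF \<open>n\<^sub>0 \<in> S\<close>]
      by linarith
    then have "real (n - n\<^sub>0) < L / lo" using \<open>0 < lo\<close> by (simp add: field_simps)
    then have "real (n - n\<^sub>0) < real (nat \<lceil>L / lo\<rceil>)" by linarith
    then show "n \<in> {n\<^sub>0..<n\<^sub>0 + nat \<lceil>L / lo\<rceil>}" using \<open>n\<^sub>0 \<le> n\<close> by simp
  qed
  then have "card S \<le> nat \<lceil>L / lo\<rceil>" using card_mono[of "{n\<^sub>0..<n\<^sub>0 + nat \<lceil>L / lo\<rceil>}"] by simp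
  then have "real (card S) \<le> real (nat \<lceil>L / lo\<rceil>)" by simp
  also have "\<dots> = of_int \<lceil>L / lo\<rceil>" using assms(2,3) by simp
  finally show ?thesis using of_int_ceiling_le_add_one[of "L / lo"] by linarith
qed (use assms in simp)

lemma finite_order_convex_eq_atLeastAtMost:
  fixes S :: "nat set"
  assumes "finite S" "S \<noteq> {}" and convex: "\<And>a b m. a \<in> S \<Longrightarrow> b \<in> S \<Longrightarrow> a \<le> m \<Longrightarrow> m \<le> b \<Longrightarrow> m \<in> S"
  shows "S = {Min S..Max S}"
proof
  show "S \<subseteq> {Min S..Max S}" using \<open>finite S\<close> by auto
  show "{Min S..Max S} \<subseteq> S"
    using convex[OF Min_in[OF assms(1,2)] Max_in[OF assms(1,2)]] by auto
qed

lemma kusmin_landau_convex: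
  fixes u :: "nat \<Rightarrow> real" and k :: int and G :: "nat set"
  assumes "finite G" "0 < \<eta>" "\<eta> \<le> 1"
    and convex: "\<And>a b m. a \<in> G \<Longrightarrow> b \<in> G \<Longrightarrow> a \<le> m \<Longrightarrow> m \<le> b \<Longrightarrow> m \<in> G"
    and range: "\<And>n. n \<in> G \<Longrightarrow> 2*pi*k + \<eta> \<le> forward_diff u n \<and> forward_diff u n \<le> 2*pi*k + 2*pi - \<eta>"
    and mono: "\<And>n. n \<in> G \<Longrightarrow> Suc n \<in> G \<Longrightarrow> forward_diff u n \<le> forward_diff u (Suc n)"
  shows "cmod (\<Sum>n\<in>G. cis (u n)) \<le> 8/\<eta>"
proof (cases "G = {}")
  case False
  have G_eq: "{Min G..Max G} = G"
    using finite_order_convex_eq_atLeastAtMost[OF \<open>finite G\<close> False convex] by (rule sym)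
  have in_G: "n \<in> G" if "Min G \<le> n" "n \<le> Max G" for n
  proof -
    have "n \<in> {Min G..Max G}" using that by simp
    then show ?thesis unfolding G_eq .
  qed
  have "cmod (\<Sum>n=Min G..Max G. cis (u n)) \<le> 8/\<eta>"
  proof (rule kusmin_landau[where k = k])
    show "Min G \<le> Max G" using \<open>finite G\<close> False by simp
    show "2*pi*k + \<eta> \<le> forward_diff u n \<and> forward_diff u n \<le> 2*pi*k + 2*pi - \<eta>"
      if "Min G \<le> n" "n \<le> Max G" for n
      using range[OF in_G[OF that]] .
    show "forward_diff u n \<le> forward_diff u (Suc n)" if "Min G \<le> n" "n < Max G" for n
      using that by (intro mono in_G) auto
  qed (use assms(2,3) in auto)
  then show ?thesis by (simp only: G_eq)
qed (use assms(2) in simp)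

(* On a fiber, the n with forward_diff u n within eta of 2 pi k are few because forward_diff u
   grows at rate at least lo; the remaining n form an interval where Kusmin-Landau applies. *)
lemma norm_sum_cis_fiber_le:
  fixes u :: "nat \<Rightarrow> real" and k :: int
  assumes "0 < lo" and \<eta>: "0 < \<eta>" "\<eta> \<le> 1"
    and spread: "\<And>n m. A \<le> n \<Longrightarrow> n \<le> m \<Longrightarrow> m < B \<Longrightarrow>
      real (m - n) * lo \<le> forward_diff u m - forward_diff u n"
  shows "cmod (\<Sum>n\<in>{n\<in>{A..<B}. \<lfloor>(forward_diff u n + \<eta>) / (2*pi)\<rfloor> = k}. cis (u n))
    \<le> 2*\<eta>/lo + 1 + 8/\<eta>"
proof -
  define D where "D = forward_diff u"
  have D_mono: "D n \<le> D m" if "A \<le> n" "n \<le> m" "m < B" for n m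
  proof -
    have "0 \<le> real (m - n) * lo" using \<open>0 < lo\<close> by simp
    then show ?thesis using spread[OF that] by (simp add: D_def)
  qed
  define F where "F = {n\<in>{A..<B}. \<lfloor>(D n + \<eta>) / (2*pi)\<rfloor> = k}"
  have F_iff: "n \<in> F \<longleftrightarrow> n \<in> {A..<B} \<and> 2*pi*k - \<eta> \<le> D n \<and> D n < 2*pi*k + 2*pi - \<eta>" for n
    unfolding F_def floor_eq_iff using pi_gt_zero by (auto simp: field_simps)
  define N where "N = {n\<in>F. D n < 2*pi*k + \<eta>}"
  define G where "G = {n\<in>F. 2*pi*k + \<eta> \<le> D n}"
  have "finite N" "finite G" "F = N \<union> G" "N \<inter> G = {}"
    by (auto simp: N_def G_def F_def)
  then have "cmod (\<Sum>n\<in>F. cis (u n)) \<le> cmod (\<Sum>n\<in>N. cis (u n)) + cmod (\<Sum>n\<in>G. cis (u n))"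
    by (simp add: sum.union_disjoint norm_triangle_ineq)
  also have "cmod (\<Sum>n\<in>N. cis (u n)) \<le> real (card N)"
    using norm_sum[of "\<lambda>n. cis (u n)" N] by simp
  also have "real (card N) \<le> 2*\<eta>/lo + 1"
  proof (rule card_le_of_spread[where D = D and c = "2*pi*k - \<eta>"])
    show "real (m - n) * lo \<le> D m - D n" if "n \<in> N" "m \<in> N" "n \<le> m" for n m
      using spread[of n m] that unfolding D_def N_def F_iff by simp
    show "2*pi*k - \<eta> \<le> D n \<and> D n < 2*pi*k - \<eta> + 2*\<eta>" if "n \<in> N" for n
      using that unfolding N_def F_iff by simp
  qed (use \<open>finite N\<close> \<open>0 < lo\<close> \<eta> in auto)
  also have "cmod (\<Sum>n\<in>G. cis (u n)) \<le> 8/\<eta>"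
  proof (rule kusmin_landau_convex[OF \<open>finite G\<close> \<eta>, where k = k])
    show "m \<in> G" if "a \<in> G" "b \<in> G" "a \<le> m" "m \<le> b" for a b m
    proof -
      have "A \<le> a" "b < B" "2*pi*k + \<eta> \<le> D a" "D b < 2*pi*k + 2*pi - \<eta>"
        using that(1,2) unfolding G_def F_iff by simp_all
      moreover have "D a \<le> D m" "D m \<le> D b"
        using D_mono[of a m] D_mono[of m b] \<open>A \<le> a\<close> \<open>b < B\<close> that(3,4) by simp_all
      ultimately show ?thesis using that(3,4) \<eta> unfolding G_def F_iff by simp
    qed
    show "2*pi*k + \<eta> \<le> forward_diff u n \<and> forward_diff u n \<le> 2*pi*k + 2*pi - \<eta>" if "n \<in> G" for n
      using that unfolding G_def F_iff D_def by simp
    show "forward_diff u n \<le> forward_diff u (Suc n)" if "n \<in> G" "Suc n \<in> G" for n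
    proof -
      have "A \<le> n" "Suc n < B" using that unfolding G_def F_iff by simp_all
      then show ?thesis using D_mono[of n "Suc n"] by (simp add: D_def)
    qed
  qed
  finally show ?thesis by (simp add: F_def D_def)
qed

lemma card_floor_image_le:
  fixes D :: "nat \<Rightarrow> real"
  assumes "A < B" "0 \<le> hi"
    and increments: "\<And>n m. A \<le> n \<Longrightarrow> n \<le> m \<Longrightarrow> m < B \<Longrightarrow> 0 \<le> D m - D n \<and> D m - D n \<le> real (m - n) * hi"
  shows "real (card ((\<lambda>n. \<lfloor>(D n + \<eta>) / (2*pi)\<rfloor>) ` {A..<B})) \<le> real (B - A) * hi / (2*pi) + 2"
proof -
  define f where "f n = \<lfloor>(D n + \<eta>) / (2*pi)\<rfloor>" for n
  have f_mono: "f n \<le> f m" if "A \<le> n" "n \<le> m" "m < B" for n m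
    using increments[OF that] unfolding f_def by (intro floor_mono divide_right_mono) auto
  have "f ` {A..<B} \<subseteq> {f A..f (B - 1)}"
    using f_mono by auto
  then have "card (f ` {A..<B}) \<le> nat (f (B - 1) - f A + 1)"
    using card_mono[of "{f A..f (B - 1)}"] by simp
  moreover have "f A \<le> f (B - 1)" using f_mono[of A "B - 1"] \<open>A < B\<close> by simp
  ultimately have "real (card (f ` {A..<B})) \<le> of_int (f (B - 1) - f A) + 1"
    by linarith
  also have "\<dots> < (D (B - 1) - D A) / (2*pi) + 2"
    unfolding f_def by (simp add: diff_divide_distrib add_divide_distrib) linarith
  also have "(D (B - 1) - D A) / (2*pi) \<le> real (B - A) * hi / (2*pi)"
  proof -
    have "D (B - 1) - D A \<le> real (B - 1 - A) * hi"
      using increments[of A "B - 1"] \<open>A < B\<close> by simp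
    also have "\<dots> \<le> real (B - A) * hi"
      using \<open>0 \<le> hi\<close> by (intro mult_right_mono) auto
    finally show ?thesis by (simp add: divide_right_mono)
  qed
  finally show ?thesis by (simp add: f_def)
qed

lemma second_derivative_test:
  fixes u :: "nat \<Rightarrow> real"
  assumes "A \<le> B" "0 < lo" "lo \<le> hi" and \<eta>: "0 < \<eta>" "\<eta> \<le> 1"
    and second_diff: "\<And>n. A \<le> n \<Longrightarrow> n + 2 \<le> B \<Longrightarrow>
      lo \<le> forward_diff (forward_diff u) n \<and> forward_diff (forward_diff u) n \<le> hi"
  shows "cmod (\<Sum>n=A..B. cis (u n)) \<le> 1 + (real (B - A) * hi / (2*pi) + 2) * (2*\<eta>/lo + 1 + 8/\<eta>)"
proof (cases "A = B")
  case True
  have "0 \<le> (real (B - A) * hi / (2*pi) + 2) * (2*\<eta>/lo + 1 + 8/\<eta>)"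
    using assms by (intro mult_nonneg_nonneg add_nonneg_nonneg) auto
  then show ?thesis using True by simp
next
  case False
  define I where "I = {A..<B}"
  define fiber where "fiber n = \<lfloor>(forward_diff u n + \<eta>) / (2*pi)\<rfloor>" for n
  define Q where "Q = 2*\<eta>/lo + 1 + 8/\<eta>"
  have increments: "real (m - n) * lo \<le> forward_diff u m - forward_diff u n
      \<and> forward_diff u m - forward_diff u n \<le> real (m - n) * hi"
    if "A \<le> n" "n \<le> m" "m < B" for n m
    using that by (intro increment_bounds_of_forward_diff second_diff) auto
  have card_fibers: "real (card (fiber ` I)) \<le> real (B - A) * hi / (2*pi) + 2"
  proof (unfold I_def fiber_def, rule card_floor_image_le)
    show "0 \<le> forward_diff u m - forward_diff u n \<and> forward_diff u m - forward_diff u n \<le> real (m - n) * hi"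
      if "A \<le> n" "n \<le> m" "m < B" for n m
    proof -
      have "0 \<le> real (m - n) * lo" using \<open>0 < lo\<close> by simp
      then show ?thesis using increments[OF that] by linarith
    qed
  qed (use False \<open>A \<le> B\<close> \<open>0 < lo\<close> \<open>lo \<le> hi\<close> in auto)
  have fiber_sum: "cmod (\<Sum>n\<in>{n\<in>I. fiber n = k}. cis (u n)) \<le> Q" for k
    unfolding I_def fiber_def Q_def using \<open>0 < lo\<close> \<eta>
    by (rule norm_sum_cis_fiber_le) (use increments in blast)
  have "{A..B} = insert B I" using \<open>A \<le> B\<close> by (auto simp: I_def)
  then have "(\<Sum>n=A..B. cis (u n)) = cis (u B) + (\<Sum>n\<in>I. cis (u n))"
    by (simp add: I_def)
  also have "(\<Sum>n\<in>I. cis (u n)) = (\<Sum>k\<in>fiber ` I. \<Sum>n\<in>{n\<in>I. fiber n = k}. cis (u n))"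
    by (rule sum.image_gen) (simp add: I_def)
  finally have "cmod (\<Sum>n=A..B. cis (u n))
      \<le> cmod (cis (u B)) + cmod (\<Sum>k\<in>fiber ` I. \<Sum>n\<in>{n\<in>I. fiber n = k}. cis (u n))"
    by (simp only: norm_triangle_ineq)
  also have "\<dots> \<le> 1 + (\<Sum>k\<in>fiber ` I. Q)"
    using order_trans[OF norm_sum sum_mono[OF fiber_sum]] by simp
  also have "\<dots> \<le> 1 + (real (B - A) * hi / (2*pi) + 2) * Q"
    using card_fibers \<open>0 < lo\<close> \<eta> by (simp add: Q_def mult_right_mono)
  finally show ?thesis by (simp add: Q_def)
qed

section \<open>Van der Corput's inequality\<close>

lemma sum_window_shift:
  fixes f :: "int \<Rightarrow> 'a::comm_monoid_add"
  assumes support: "\<And>j. j < a \<or> b < j \<Longrightarrow> f j = 0" and "0 \<le> d" "d < int H"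
  shows "(\<Sum>m\<in>{a - int H + 1..b}. f (m + d)) = (\<Sum>j\<in>{a..b}. f j)"
proof -
  have "(\<Sum>m\<in>{a - int H + 1..b}. f (m + d)) = (\<Sum>j\<in>{a - int H + 1 + d..b + d}. f j)"
    by (rule sum.reindex_bij_witness[of _ "\<lambda>j. j - d" "\<lambda>m. m + d"]) auto
  also have "\<dots> = (\<Sum>j\<in>{a..b}. f j)"
    using assms by (intro sum.mono_neutral_right) auto
  finally show ?thesis .
qed

lemma sum_distance_le:
  fixes g :: "nat \<Rightarrow> real"
  assumes "\<And>h. 0 \<le> g h" "r < H"
  shows "(\<Sum>s<H. g (if s \<le> r then r - s else s - r)) \<le> g 0 + 2 * (\<Sum>h=1..<H. g h)"
proof -
  have split: "{..<H} = {..r} \<union> {r<..<H}" using \<open>r < H\<close> by auto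
  have "(\<Sum>s<H. g (if s \<le> r then r - s else s - r))
      = (\<Sum>s\<in>{..r}. g (if s \<le> r then r - s else s - r)) + (\<Sum>s\<in>{r<..<H}. g (if s \<le> r then r - s else s - r))"
    unfolding split by (rule sum.union_disjoint) auto
  also have "\<dots> = (\<Sum>s\<in>{..r}. g (r - s)) + (\<Sum>s\<in>{r<..<H}. g (s - r))"
    by (intro arg_cong2[where f = "(+)"] sum.cong) auto
  also have "(\<Sum>s\<in>{..r}. g (r - s)) = (\<Sum>h\<in>(\<lambda>s. r - s) ` {..r}. g h)"
    by (rule sum.reindex[symmetric, unfolded comp_def]) (auto simp: inj_on_def)
  also have "\<dots> \<le> (\<Sum>h<H. g h)"
    using assms by (intro sum_mono2) auto
  also have "(\<Sum>s\<in>{r<..<H}. g (s - r)) = (\<Sum>h\<in>(\<lambda>s. s - r) ` {r<..<H}. g h)"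
    by (rule sum.reindex[symmetric, unfolded comp_def]) (auto simp: inj_on_def)
  also have "\<dots> \<le> (\<Sum>h=1..<H. g h)"
    using assms by (intro sum_mono2) auto
  also have "(\<Sum>h<H. g h) = g 0 + (\<Sum>h=1..<H. g h)"
    using \<open>r < H\<close> by (simp add: lessThan_atLeast0 sum.atLeast_Suc_lessThan)
  finally show ?thesis by simp
qed

lemma sum_norm_window_sums_squared_le:
  fixes w :: "int \<Rightarrow> complex"
  assumes support: "\<And>j. j < a \<or> b < j \<Longrightarrow> w j = 0"
  defines "c h \<equiv> \<Sum>j\<in>{a..b}. w (j + int h) * cnj (w j)"
  shows "(\<Sum>m\<in>{a - int H + 1..b}. (cmod (\<Sum>r<H. w (m + int r)))\<^sup>2)
    \<le> real H * (cmod (c 0) + 2 * (\<Sum>h=1..<H. cmod (c h)))"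
proof -
  define T where "T r s = (\<Sum>m\<in>{a - int H + 1..b}. w (m + int r) * cnj (w (m + int s)))" for r s
  have T_eq: "T r s = c (r - s)" if "s \<le> r" "r < H" for r s
  proof -
    have "T r s = (\<Sum>m\<in>{a - int H + 1..b}. w (m + int s + int (r - s)) * cnj (w (m + int s)))"
      unfolding T_def using that by (intro sum.cong) (auto simp: algebra_simps)
    also have "\<dots> = c (r - s)"
      unfolding c_def using support that by (intro sum_window_shift) auto
    finally show ?thesis .
  qed
  have norm_T: "cmod (T r s) = cmod (c (if s \<le> r then r - s else s - r))" if "r < H" "s < H" for r s
  proof (cases "s \<le> r")
    case False
    have "T r s = cnj (T s r)" by (simp add: T_def cnj_sum mult.commute)
    then show ?thesis using T_eq[of r s] that False by simp
  qed (use T_eq that in simp)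
  have "complex_of_real (\<Sum>m\<in>{a - int H + 1..b}. (cmod (\<Sum>r<H. w (m + int r)))\<^sup>2) = (\<Sum>r<H. \<Sum>s<H. T r s)"
    unfolding of_real_sum complex_norm_square T_def
    by (simp add: sum_product cnj_sum sum.swap[of _ "{a - int H + 1..b}"])
  then have "(\<Sum>m\<in>{a - int H + 1..b}. (cmod (\<Sum>r<H. w (m + int r)))\<^sup>2) \<le> cmod (\<Sum>r<H. \<Sum>s<H. T r s)"
    by (metis Re_complex_of_real complex_Re_le_cmod)
  also have "\<dots> \<le> (\<Sum>r<H. \<Sum>s<H. cmod (T r s))"
    by (rule order_trans[OF norm_sum sum_mono[OF norm_sum]])
  also have "\<dots> \<le> (\<Sum>r<H. cmod (c 0) + 2 * (\<Sum>h=1..<H. cmod (c h)))"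
    using norm_T sum_distance_le[of "\<lambda>h. cmod (c h)"] by (intro sum_mono) simp
  finally show ?thesis by simp
qed

lemma van_der_corput_inequality_int:
  fixes w :: "int \<Rightarrow> complex"
  assumes support: "\<And>j. j < a \<or> b < j \<Longrightarrow> w j = 0" and "a \<le> b"
  defines "c h \<equiv> \<Sum>j\<in>{a..b}. w (j + int h) * cnj (w j)"
  shows "(real H * cmod (\<Sum>j\<in>{a..b}. w j))\<^sup>2
    \<le> real H * (cmod (c 0) + 2 * (\<Sum>h=1..<H. cmod (c h))) * real (nat (b - a) + H)"
proof -
  define Ms where "Ms = {a - int H + 1..b}"
  have "of_nat H * (\<Sum>j\<in>{a..b}. w j) = (\<Sum>r<H. \<Sum>j\<in>{a..b}. w j)"
    by simp
  also have "\<dots> = (\<Sum>m\<in>Ms. \<Sum>r<H. w (m + int r))"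
    unfolding Ms_def using support by (simp add: sum_window_shift sum.swap[of _ "{..<H}"])
  finally have "(real H * cmod (\<Sum>j\<in>{a..b}. w j))\<^sup>2 = (cmod (\<Sum>m\<in>Ms. \<Sum>r<H. w (m + int r)))\<^sup>2"
    by (metis norm_mult norm_of_nat)
  also have "\<dots> \<le> (\<Sum>m\<in>Ms. cmod (\<Sum>r<H. w (m + int r)))\<^sup>2"
    by (intro power_mono norm_sum) simp
  also have "\<dots> \<le> (\<Sum>m\<in>Ms. (cmod (\<Sum>r<H. w (m + int r)))\<^sup>2) * card Ms"
    by (rule sum_squared_le_sum_of_squares)
  also have "\<dots> \<le> real H * (cmod (c 0) + 2 * (\<Sum>h=1..<H. cmod (c h))) * real (nat (b - a) + H)"
    using sum_norm_window_sums_squared_le[where a = a and b = b and w = w and H = H] support \<open>a \<le> b\<close>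
    by (intro mult_mono) (auto simp: Ms_def c_def sum_nonneg nat_add_distrib)
  finally show ?thesis .
qed

lemma van_der_corput_inequality:
  fixes z :: "nat \<Rightarrow> complex"
  assumes "A \<le> B" "1 \<le> H"
  shows "(cmod (\<Sum>n=A..B. z n))\<^sup>2 \<le> real (B - A + H) / real H *
     ((\<Sum>n=A..B. (cmod (z n))\<^sup>2) + 2 * (\<Sum>h=1..<H. cmod (\<Sum>n\<in>{n. A \<le> n \<and> n + h \<le> B}. z (n + h) * cnj (z n))))"
proof -
  define w where "w j = (if int A \<le> j \<and> j \<le> int B then z (nat j) else 0)" for j
  have support: "w j = 0" if "j < int A \<or> int B < j" for j
    using that by (auto simp: w_def)
  define c where "c h = (\<Sum>j\<in>{int A..int B}. w (j + int h) * cnj (w j))" for h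
  have int_sum: "(\<Sum>j\<in>{int A..int B}. f j) = (\<Sum>n=A..B. f (int n))" for f :: "int \<Rightarrow> complex"
    by (rule sum.reindex_bij_witness[of _ int nat]) auto
  have c_eq: "c h = (\<Sum>n\<in>{n. A \<le> n \<and> n + h \<le> B}. z (n + h) * cnj (z n))" for h
  proof -
    have "c h = (\<Sum>n=A..B. if n + h \<le> B then z (n + h) * cnj (z n) else 0)"
      unfolding c_def int_sum by (intro sum.cong) (auto simp: w_def nat_add_distrib)
    also have "\<dots> = (\<Sum>n\<in>{n\<in>{A..B}. n + h \<le> B}. z (n + h) * cnj (z n))"
      by (rule sum.inter_filter[symmetric]) simp
    also have "{n\<in>{A..B}. n + h \<le> B} = {n. A \<le> n \<and> n + h \<le> B}" by auto
    finally show ?thesis .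
  qed
  have c_0: "cmod (c 0) = (\<Sum>n=A..B. (cmod (z n))\<^sup>2)"
  proof -
    have "c 0 = of_real (\<Sum>n=A..B. (cmod (z n))\<^sup>2)"
      unfolding c_eq of_real_sum complex_norm_square by (intro sum.cong) auto
    then show ?thesis by (simp only: norm_of_real) (simp add: sum_nonneg)
  qed
  have "(\<Sum>j\<in>{int A..int B}. w j) = (\<Sum>n=A..B. z n)"
    unfolding int_sum by (simp add: w_def)
  then have "real H * (real H * (cmod (\<Sum>n=A..B. z n))\<^sup>2)
      \<le> real H * ((cmod (c 0) + 2 * (\<Sum>h=1..<H. cmod (c h))) * real (B - A + H))"
    using van_der_corput_inequality_int[where a = "int A" and b = "int B" and w = w and H = H]
      support \<open>A \<le> B\<close>
    by (simp add: c_def power2_eq_square algebra_simps of_nat_diff)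
  then have "real H * (cmod (\<Sum>n=A..B. z n))\<^sup>2 \<le> (cmod (c 0) + 2 * (\<Sum>h=1..<H. cmod (c h))) * real (B - A + H)"
    using \<open>1 \<le> H\<close> by simp
  then show ?thesis
    using \<open>1 \<le> H\<close> unfolding c_0 unfolding c_eq by (simp add: field_simps)
qed

section \<open>Sums of \<open>cis (- t * ln n)\<close> over dyadic blocks\<close>

lemma ln_second_difference_increment_bounds:
  fixes x h :: real
  assumes "0 < x" "0 \<le> h"
  defines "f \<equiv> \<lambda>y. ln y - 2 * ln (y + 1) + ln (y + 2)"
  shows "2*h / (x + h + 2)^3 \<le> f (x + h) - f x \<and> f (x + h) - f x \<le> 2*h / x^3"
proof (cases "h = 0")
  case False
  then have "x < x + h" using assms by simp
  moreover have "(f has_real_derivative (1/y - 2/(y + 1) + 1/(y + 2))) (at y)"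
    if "x \<le> y" for y
    unfolding f_def using that \<open>0 < x\<close> by (auto intro!: derivative_eq_intros)
  ultimately obtain y where y: "x < y" "y < x + h" "f (x + h) - f x = h * (1/y - 2/(y + 1) + 1/(y + 2))"
    using MVT2[of x "x + h" f] by force
  have "1/y - 2/(y + 1) + 1/(y + 2) = 2 / (y * (y + 1) * (y + 2))"
  proof -
    have "0 < y" using y(1) \<open>0 < x\<close> by simp
    then show ?thesis by (simp add: divide_simps) (simp add: algebra_simps)
  qed
  moreover have "x^3 \<le> y * (y + 1) * (y + 2)" "y * (y + 1) * (y + 2) \<le> (x + h + 2)^3"
    using y \<open>0 < x\<close> unfolding power3_eq_cube by (intro mult_mono; simp)+
  ultimately have "2 / (x + h + 2)^3 \<le> 2 / (y * (y + 1) * (y + 2))"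
    "2 / (y * (y + 1) * (y + 2)) \<le> 2 / x^3"
    using y \<open>0 < x\<close> by (auto intro!: divide_left_mono mult_pos_pos)
  then have "h * (2 / (x + h + 2)^3) \<le> h * (2 / (y * (y + 1) * (y + 2)))"
    "h * (2 / (y * (y + 1) * (y + 2))) \<le> h * (2 / x^3)"
    using \<open>0 \<le> h\<close> by (meson mult_left_mono)+
  then show ?thesis using y(3) \<open>1/y - 2/(y + 1) + 1/(y + 2) = 2 / (y * (y + 1) * (y + 2))\<close>
    by (simp add: mult.commute)
qed simp

lemma ln_shift_second_difference_bounds:
  fixes t :: real and h M n :: nat
  assumes "0 < t" "M + 1 \<le> n" "n + h + 2 \<le> 2 * M"
  defines "v \<equiv> \<lambda>n. t * ln (real (n + h)) - t * ln (real n)"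
  shows "t * h / (4 * real M ^ 3) \<le> forward_diff (forward_diff v) n
    \<and> forward_diff (forward_diff v) n \<le> 2 * t * h / real M ^ 3"
proof -
  define f where "f y = ln y - 2 * ln (y + 1) + ln (y + 2)" for y :: real
  have "0 < real n" "0 < real M" using assms by simp_all
  have f_bounds: "2*h / (real n + h + 2)^3 \<le> f (real n + h) - f (real n)"
    "f (real n + h) - f (real n) \<le> 2*h / (real n)^3"
    using ln_second_difference_increment_bounds[OF \<open>0 < real n\<close>, of h] by (simp_all add: f_def)
  have "forward_diff (forward_diff v) n = t * (f (real n + h) - f (real n))"
    by (simp add: forward_diff_def v_def f_def algebra_simps)
  moreover have "t * (2*h / (real n + h + 2)^3) \<le> t * (f (real n + h) - f (real n))"
    "t * (f (real n + h) - f (real n)) \<le> t * (2*h / (real n)^3)"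
    using f_bounds \<open>0 < t\<close> by (simp_all only: mult_left_mono less_imp_le)
  moreover have "t * h / (4 * real M ^ 3) \<le> t * (2*h / (real n + h + 2)^3)"
  proof -
    have "(real n + h + 2)^3 \<le> (2 * real M)^3" using assms by (intro power_mono) auto
    then have "2*h / (2 * real M)^3 \<le> 2*h / (real n + h + 2)^3"
      using \<open>0 < real n\<close> \<open>0 < real M\<close> by (intro divide_left_mono) auto
    then have "h / (4 * real M ^ 3) \<le> 2*h / (real n + h + 2)^3" by (simp add: power_mult_distrib)
    then show ?thesis using mult_left_mono[OF _ less_imp_le[OF \<open>0 < t\<close>]] by fastforce
  qed
  moreover have "t * (2*h / (real n)^3) \<le> 2 * t * h / real M ^ 3"
  proof -
    have "(real M)^3 \<le> (real n)^3" using assms by (intro power_mono) auto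
    then have "2*h / (real n)^3 \<le> 2*h / (real M)^3"
      using \<open>0 < real M\<close> by (intro divide_left_mono) auto
    then have "t * (2*h / (real n)^3) \<le> t * (2*h / (real M)^3)"
      using \<open>0 < t\<close> by (intro mult_left_mono) auto
    then show ?thesis by (simp add: mult_ac)
  qed
  ultimately show ?thesis by (metis order_trans)
qed

lemma correlation_fiber_count_bounds:
  fixes s t M h :: real
  assumes "0 < s" "0 < t" "0 < h" "64 * s \<le> M" "t * h \<le> s^2 * M"
  defines "P \<equiv> t * h / (pi * M^2)" and "R \<equiv> 8 * s * M^2 / (t * h)"
  shows "P * R \<le> 8 * s / 3" "P \<le> s / 192" "P * M / s \<le> s / 3"
proof -
  have "0 < M" using assms(1,4) by simp
  have "P * R = 8 * s / pi"
    using assms(1-3) \<open>0 < M\<close> by (simp add: P_def R_def field_simps power2_eq_square)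
  also have "\<dots> \<le> 8 * s / 3"
    using assms(1) pi_gt3 by (intro divide_left_mono) auto
  finally show "P * R \<le> 8 * s / 3" .
  have "P \<le> s^2 * M / (pi * M^2)"
    unfolding P_def using assms(5) \<open>0 < M\<close> by (intro divide_right_mono) auto
  also have "\<dots> = s^2 / (pi * M)" using \<open>0 < M\<close> by (simp add: power2_eq_square)
  also have "\<dots> \<le> s^2 / (3 * (64 * s))"
    using assms(1,4) pi_gt3 by (intro divide_left_mono mult_mono) auto
  finally show "P \<le> s / 192" using assms(1) by (simp add: power2_eq_square)
  have "P * M / s = t * h / (pi * M * s)"
    using \<open>0 < M\<close> by (simp add: P_def power2_eq_square)
  also have "\<dots> \<le> s^2 * M / (pi * M * s)"
    using assms(1,5) \<open>0 < M\<close> by (intro divide_right_mono) auto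
  also have "\<dots> = s / pi"
    using assms(1) \<open>0 < M\<close> by (simp add: power2_eq_square)
  also have "\<dots> \<le> s / 3"
    using assms(1) pi_gt3 by (intro divide_left_mono) auto
  finally show "P * M / s \<le> s / 3" .
qed

lemma correlation_fiber_size_bounds:
  fixes s t M h :: real
  assumes "1000 \<le> s" "s^3 = t" "6 * M^2 \<le> t" "1 \<le> h"
  shows "8 * s * M^2 / (t * h) \<le> 8 * s / 6" "16 * M / s \<le> s / 2"
proof -
  have "0 < s" "0 < t" using assms(1,2) by (auto simp flip: assms(2))
  have "8 * s * M^2 / (t * h) \<le> 8 * s * M^2 / t"
    using \<open>0 < s\<close> \<open>0 < t\<close> assms(4) by (intro divide_left_mono) (auto intro: mult_pos_pos)
  also have "\<dots> = 8 * M^2 / s^2"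
    using \<open>0 < s\<close> by (simp add: assms(2)[symmetric] power2_eq_square power3_eq_cube)
  also have "\<dots> \<le> 8 * (s^3 / 6) / s^2"
    using assms(2,3) by (intro divide_right_mono) auto
  finally show "8 * s * M^2 / (t * h) \<le> 8 * s / 6"
    using \<open>0 < s\<close> by (simp add: power2_eq_square power3_eq_cube)
  have "(32 * M)^2 \<le> 1024 * (s^3 / 6)" using assms(2,3) by (simp add: power2_eq_square)
  also have "\<dots> \<le> (s^2)^2" using assms(1) by (simp add: power2_eq_square power3_eq_cube)
  finally have "32 * M \<le> s^2" by (rule power2_le_imp_le) simp
  then show "16 * M / s \<le> s / 2" using \<open>0 < s\<close> by (simp add: divide_simps power2_eq_square)
qed

(* The bound of the second-derivative test for a block of length L, with lo = t h / (4 M^3),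
   hi = 2 t h / M^3 and eta = s / M. *)
lemma correlation_numeric_bound:
  fixes s t M h L :: real
  assumes "1000 \<le> s" "s^3 = t" "64 * s \<le> M" "2*pi*M^2 \<le> t" "1 \<le> h" "h \<le> M / s" "0 \<le> L" "L \<le> M"
  shows "1 + (L * (2*t*h / M^3) / (2*pi) + 2) * (2*(s/M) / (t*h / (4*M^3)) + 1 + 8/(s/M)) \<le> 9 * s"
proof -
  have "0 < s" "0 < h" using assms(1,5) by simp_all
  then have "0 < t" "0 < M" using assms(2,3) by (auto simp flip: assms(2))
  define P where "P = t * h / (pi * M^2)"
  define R where "R = 8 * s * M^2 / (t * h)"
  have "t * h \<le> t * (M / s)" using assms \<open>0 < t\<close> by (intro mult_left_mono) auto
  also have "\<dots> = s^2 * M" using assms(2) \<open>0 < s\<close> by (simp add: power3_eq_cube power2_eq_square field_simps)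
  finally have P_bounds: "P * R \<le> 8 * s / 3" "P \<le> s / 192" "P * M / s \<le> s / 3"
    using correlation_fiber_count_bounds[OF \<open>0 < s\<close> \<open>0 < t\<close> \<open>0 < h\<close> assms(3)] by (simp_all add: P_def R_def)
  have "6 * M^2 \<le> 2*pi*M^2" using pi_gt3 by (intro mult_right_mono) auto
  then have R_bounds: "R \<le> 8 * s / 6" "16 * M / s \<le> s / 2"
    using correlation_fiber_size_bounds[OF assms(1,2) _ assms(5)] assms(4) by (simp_all add: R_def)
  have "L * (2*t*h / M^3) \<le> M * (2*t*h / M^3)"
    using assms \<open>0 < t\<close> \<open>0 < M\<close> \<open>0 < h\<close> by (intro mult_right_mono) auto
  then have "L * (2*t*h / M^3) / (2*pi) \<le> P"
    using \<open>0 < M\<close> by (simp add: P_def divide_right_mono power2_eq_square power3_eq_cube field_simps)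
  moreover have "2*(s/M) / (t*h / (4*M^3)) = R" "8/(s/M) = 8*M/s"
    using \<open>0 < M\<close> by (simp_all add: R_def field_simps power3_eq_cube power2_eq_square)
  moreover have "0 \<le> R" using \<open>0 < s\<close> \<open>0 < t\<close> \<open>0 < h\<close> by (simp add: R_def)
  ultimately have "1 + (L * (2*t*h / M^3) / (2*pi) + 2) * (2*(s/M) / (t*h / (4*M^3)) + 1 + 8/(s/M))
      \<le> 1 + (P + 2) * (R + 1 + 8*M/s)"
    using \<open>0 < s\<close> \<open>0 < M\<close> by (simp add: mult_right_mono)
  also have "\<dots> = 3 + P * R + P + 8 * (P * M / s) + 2 * R + 16 * M / s"
    by (simp add: algebra_simps add_divide_distrib)
  also have "\<dots> \<le> 9 * s"
    using P_bounds R_bounds assms(1) by linarith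
  finally show ?thesis .
qed

lemma correlation_sum_bound:
  fixes s t :: real and M A B h :: nat
  assumes "1000 \<le> s" "s^3 = t" "64 * s \<le> M" "2*pi * real M ^ 2 \<le> t"
    and "M + 1 \<le> A" "B \<le> 2 * M" "1 \<le> h" "real h \<le> M / s"
  shows "cmod (\<Sum>n\<in>{n. A \<le> n \<and> n + h \<le> B}. cis (- t * ln (n + h)) * cnj (cis (- t * ln n))) \<le> 9 * s"
proof (cases "A + h \<le> B")
  case False
  then have "{n. A \<le> n \<and> n + h \<le> B} = {}" by auto
  then show ?thesis using assms(1) by (simp only:) simp
next
  case True
  have "0 < s" "0 < real M" "0 < real h" using assms(1,3,7) by simp_all
  then have "0 < t" using assms(2) by (auto simp flip: assms(2))
  define v where "v = (\<lambda>n. t * ln (real (n + h)) - t * ln (real n))"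
  have "{n. A \<le> n \<and> n + h \<le> B} = {A..B - h}" using True by auto
  then have "(\<Sum>n\<in>{n. A \<le> n \<and> n + h \<le> B}. cis (- t * ln (n + h)) * cnj (cis (- t * ln n)))
      = cnj (\<Sum>n=A..B - h. cis (v n))"
    by (simp add: cnj_sum cis_cnj cis_mult v_def algebra_simps)
  then have "cmod (\<Sum>n\<in>{n. A \<le> n \<and> n + h \<le> B}. cis (- t * ln (n + h)) * cnj (cis (- t * ln n)))
      = cmod (\<Sum>n=A..B - h. cis (v n))"
    by (simp only: complex_mod_cnj)
  also have "\<dots> \<le> 1 + (real (B - h - A) * (2*t*h / real M ^ 3) / (2*pi) + 2)
      * (2*(s/M) / (t*h / (4 * real M ^ 3)) + 1 + 8/(s/M))"
  proof (rule second_derivative_test)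
    show "t * h / (4 * real M ^ 3) \<le> forward_diff (forward_diff v) n
      \<and> forward_diff (forward_diff v) n \<le> 2 * t * h / real M ^ 3" if "A \<le> n" "n + 2 \<le> B - h" for n
      unfolding v_def using that assms True \<open>0 < t\<close> by (intro ln_shift_second_difference_bounds) auto
  qed (use True assms \<open>0 < s\<close> \<open>0 < t\<close> \<open>0 < real M\<close> \<open>0 < real h\<close> in \<open>auto simp: field_simps\<close>)
  also have "\<dots> \<le> 9 * s"
    using assms True by (intro correlation_numeric_bound) auto
  finally show ?thesis .
qed

lemma van_der_corput_numeric_bound:
  fixes s M H :: real
  assumes "1000 \<le> s" "64 * s \<le> M" "H \<le> M / s" "M / s < H + 1"
  shows "(M + H) / H * (M + 2 * ((H - 1) * (9 * s))) \<le> 25 * (M * s)"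
proof -
  have "0 < s" using assms(1) by simp
  then have "64 \<le> M / s" using assms(2) by (simp add: pos_le_divide_eq)
  then have "0 < H" "M / s \<le> 2 * H" using assms(4) by linarith+
  then have "M \<le> 2 * s * H" "s * H \<le> M"
    using assms(3) \<open>0 < s\<close> by (simp_all add: field_simps)
  have "(M + H) / H * (M + 2 * ((H - 1) * (9 * s))) \<le> (M + H) / H * (M + 18 * s * H)"
    using \<open>0 < H\<close> \<open>0 < s\<close> assms(2) by (intro mult_left_mono) auto
  also have "\<dots> = M * (M / H) + M + 18 * s * M + 18 * (s * H)"
    using \<open>0 < H\<close> by (simp add: field_simps)
  also have "\<dots> \<le> M * (2 * s) + M + 18 * s * M + 18 * M"
  proof -
    have "M / H \<le> 2 * s" using \<open>M \<le> 2 * s * H\<close> \<open>0 < H\<close> by (simp add: divide_simps)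
    then have "M * (M / H) \<le> M * (2 * s)" using \<open>0 < s\<close> assms(2) by (intro mult_left_mono) auto
    then show ?thesis using \<open>s * H \<le> M\<close> by linarith
  qed
  also have "\<dots> \<le> 25 * (M * s)"
    using assms(1,2) by (simp add: algebra_simps)
  finally show ?thesis .
qed

(* The differencing length H = floor (M / s) balances M^2 / H against M s in van der Corput's
   inequality. *)
lemma dyadic_block_bound:
  fixes s t :: real and M A B :: nat
  assumes "1000 \<le> s" "s^3 = t" "64 * s \<le> M" "2*pi * real M ^ 2 \<le> t"
    and "M + 1 \<le> A" "A \<le> B" "B \<le> 2 * M"
  shows "cmod (\<Sum>n=A..B. cis (- t * ln n)) \<le> 5 * sqrt (M * s)"
proof -
  have "0 < s" using assms(1) by simp
  define H where "H = nat \<lfloor>M / s\<rfloor>"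
  have H_le: "real H \<le> M / s" and H_gt: "M / s < real H + 1"
    using \<open>0 < s\<close> by (simp_all add: H_def)
  moreover have "64 \<le> M / s" using assms(3) \<open>0 < s\<close> by (simp add: pos_le_divide_eq)
  ultimately have "1 \<le> H" by linarith
  define C where "C h = cmod (\<Sum>n\<in>{n. A \<le> n \<and> n + h \<le> B}. cis (- t * ln (n + h)) * cnj (cis (- t * ln n)))" for h
  have "(cmod (\<Sum>n=A..B. cis (- t * ln n)))\<^sup>2
      \<le> real (B - A + H) / real H * ((\<Sum>n=A..B. (cmod (cis (- t * ln n)))\<^sup>2) + 2 * (\<Sum>h=1..<H. C h))"
    using van_der_corput_inequality[OF assms(6) \<open>1 \<le> H\<close>, of "\<lambda>n. cis (- t * ln n)"]
    by (simp add: C_def)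
  also have "\<dots> \<le> (real M + real H) / real H * (real M + 2 * ((real H - 1) * (9 * s)))"
  proof (intro mult_mono add_mono divide_right_mono mult_left_mono)
    show "(\<Sum>n=A..B. (cmod (cis (- t * ln n)))\<^sup>2) \<le> M" using assms(5,7) by simp
    have "C h \<le> 9 * s" if "h \<in> {1..<H}" for h
      using correlation_sum_bound[OF assms(1-5,7), of h] that H_le by (simp add: C_def)
    then have "(\<Sum>h=1..<H. C h) \<le> (\<Sum>h=1..<H. 9 * s)" by (rule sum_mono)
    then show "(\<Sum>h=1..<H. C h) \<le> (real H - 1) * (9 * s)" using \<open>1 \<le> H\<close> by (simp add: of_nat_diff)
  qed (use assms \<open>0 < s\<close> in \<open>auto simp: C_def sum_nonneg\<close>)
  also have "\<dots> \<le> 25 * (M * s)"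
    using assms(1,3) H_le H_gt \<open>1 \<le> H\<close> by (intro van_der_corput_numeric_bound) auto
  finally have "cmod (\<Sum>n=A..B. cis (- t * ln n)) \<le> sqrt (25 * (M * s))"
    by (simp add: real_le_rsqrt)
  then show ?thesis by (simp add: real_sqrt_mult)
qed

section \<open>Partial sums of the zeta function on the critical line\<close>

lemma norm_sum_weighted_le:
  fixes w :: "nat \<Rightarrow> real" and f :: "nat \<Rightarrow> 'a::real_normed_field"
  assumes "a \<le> b" and antimono: "\<And>n. a \<le> n \<Longrightarrow> n < b \<Longrightarrow> w (Suc n) \<le> w n" and "0 \<le> w b"
    and partial: "\<And>k. a \<le> k \<Longrightarrow> k \<le> b \<Longrightarrow> norm (\<Sum>n=a..k. f n) \<le> P"
  shows "norm (\<Sum>n=a..b. of_real (w n) * f n) \<le> w a * P"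
proof -
  define F where "F k = (\<Sum>n\<in>{a..<k}. f n)" for k
  have F_Suc: "F (Suc k) = (\<Sum>n=a..k. f n)" for k
    by (simp add: F_def atLeastLessThanSuc_atLeastAtMost)
  have "(\<Sum>n=a..b. of_real (w n) * f n) = (\<Sum>n=a..b. of_real (w n) * (F (Suc n) - F n))"
    by (intro sum.cong) (auto simp: F_def)
  also have "\<dots> = of_real (w b) * F (Suc b) - of_real (w a) * F a
      - (\<Sum>n=a..<b. (of_real (w (Suc n)) - of_real (w n)) * F (Suc n))"
    using \<open>a \<le> b\<close> by (rule sum_by_parts)
  finally have "norm (\<Sum>n=a..b. of_real (w n) * f n)
      \<le> w b * norm (F (Suc b)) + (\<Sum>n=a..<b. (w n - w (Suc n)) * norm (F (Suc n)))"
    using antimono \<open>0 \<le> w b\<close>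
    by (auto simp: F_def norm_mult norm_minus_commute simp flip: of_real_diff
        intro!: order_trans[OF norm_triangle_ineq4] add_mono order_trans[OF norm_sum] sum_mono)
  also have "\<dots> \<le> w b * P + (\<Sum>n=a..<b. (w n - w (Suc n)) * P)"
    using antimono partial \<open>0 \<le> w b\<close> \<open>a \<le> b\<close>
    by (intro add_mono mult_left_mono sum_mono) (auto simp: F_Suc)
  also have "(\<Sum>n=a..<b. (w n - w (Suc n)) * P) = (w a - w b) * P"
    using sum_Suc_diff'[OF \<open>a \<le> b\<close>, of w] by (simp add: sum_distrib_right[symmetric] sum_subtractf)
  finally show ?thesis by (simp add: algebra_simps)
qed

lemma weighted_dyadic_block_bound:
  fixes s t :: real and M K :: nat
  assumes "1000 \<le> s" "s^3 = t" "64 * s \<le> M" "2*pi * real M ^ 2 \<le> t" "K \<le> 2 * M"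
  shows "cmod (\<Sum>n\<in>{M<..K}. of_real (1 / sqrt n) * cis (- t * ln n)) \<le> 5 * sqrt s"
proof (cases "M < K")
  case True
  have "cmod (\<Sum>n=Suc M..K. of_real (1 / sqrt n) * cis (- t * ln n)) \<le> 1 / sqrt (Suc M) * (5 * sqrt (M * s))"
  proof (rule norm_sum_weighted_le)
    show "norm (\<Sum>n=Suc M..k. cis (- t * ln n)) \<le> 5 * sqrt (M * s)" if "Suc M \<le> k" "k \<le> K" for k
      using that assms by (intro dyadic_block_bound) auto
  qed (use True in \<open>auto intro: divide_left_mono\<close>)
  also have "\<dots> \<le> 5 * sqrt s"
  proof -
    have "sqrt (M * s) \<le> sqrt (Suc M) * sqrt s"
      using assms(1) by (simp flip: real_sqrt_mult add: mult_right_mono)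
    then show ?thesis by (simp add: divide_simps mult.commute)
  qed
  finally show ?thesis by (simp add: atLeastSucAtMost_greaterThanAtMost)
qed (use assms(1) in simp)

lemma norm_sum_dyadic_le:
  fixes f :: "nat \<Rightarrow> 'a::real_normed_vector"
  assumes "0 \<le> C" and block: "\<And>M. m \<le> M \<Longrightarrow> M < N \<Longrightarrow> norm (\<Sum>n\<in>{M<..min N (2 * M)}. f n) \<le> C"
  shows "norm (\<Sum>n\<in>{m<..min N (m * 2^J)}. f n) \<le> real J * C"
proof (induction J)
  case (Suc J)
  define M where "M = m * 2^J"
  have split: "{m<..min N (2 * M')} = {m<..min N M'} \<union> {M'<..min N (2 * M')}" if "m \<le> M'" for M'
    using that by auto
  have "m * 2^Suc J = 2 * M" by (simp add: M_def)
  then have "{m<..min N (m * 2^Suc J)} = {m<..min N M} \<union> {M<..min N (2 * M)}"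
    by (simp only:) (rule split, simp add: M_def)
  then have "(\<Sum>n\<in>{m<..min N (m * 2^Suc J)}. f n) = (\<Sum>n\<in>{m<..min N M}. f n) + (\<Sum>n\<in>{M<..min N (2 * M)}. f n)"
    by (simp add: sum.union_disjoint)
  moreover have "norm (\<Sum>n\<in>{M<..min N (2 * M)}. f n) \<le> C"
  proof (cases "M < N")
    case True
    then show ?thesis using block[of M] by (simp add: M_def)
  qed (use \<open>0 \<le> C\<close> in simp)
  ultimately show ?case
    using Suc.IH norm_triangle_ineq[of "\<Sum>n\<in>{m<..min N M}. f n" "\<Sum>n\<in>{M<..min N (2 * M)}. f n"]
    by (simp add: M_def algebra_simps)
qed simp

lemma sum_inverse_sqrt_le: "(\<Sum>n=1..N. 1 / sqrt (real n)) \<le> 2 * sqrt N"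
proof (induction N)
  case (Suc N)
  define a b where "a = sqrt N" "b = sqrt (Suc N)"
  have "0 < b" "0 \<le> a" "a \<le> b" "b * b - a * a = 1" by (simp_all add: a_b_def)
  then have "1 = (b - a) * (b + a)" by (simp add: algebra_simps)
  also have "\<dots> \<le> (b - a) * (2 * b)"
    using \<open>0 \<le> a\<close> \<open>a \<le> b\<close> by (intro mult_left_mono) auto
  finally have "1 \<le> 2 * (b - a) * b" by (simp add: algebra_simps)
  then have "1 / b \<le> 2 * (b - a)" using \<open>0 < b\<close> by (simp add: divide_le_eq)
  then show ?case using Suc by (simp add: a_b_def algebra_simps)
qed simp

lemma norm_partial_sum_le_two_sqrt:
  fixes t :: real and N :: nat
  shows "cmod (\<Sum>n=1..N. of_real (1 / sqrt n) * cis (- t * ln n)) \<le> 2 * sqrt N"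
proof -
  have "cmod (of_real (1 / sqrt n) * cis (- t * ln n)) = 1 / sqrt n" for n :: nat
    by (simp only: norm_mult norm_cis norm_of_real mult_1_right) simp
  then have "cmod (\<Sum>n=1..N. of_real (1 / sqrt n) * cis (- t * ln n)) \<le> (\<Sum>n=1..N. 1 / sqrt n)"
    using norm_sum[of "\<lambda>n. of_real (1 / sqrt n) * cis (- t * ln n)" "{1..N}"] by simp
  also have "\<dots> \<le> 2 * sqrt N" by (rule sum_inverse_sqrt_le)
  finally show ?thesis .
qed

lemma inverse_nat_powr_critical_line:
  assumes "1 \<le> n"
  shows "1 / (of_nat n powr (Complex (1/2) t)) = of_real (1 / sqrt n) * cis (- t * ln n)"
proof -
  have "(of_nat n :: complex) powr (Complex (1/2) t) = exp (Complex (1/2) t * of_real (ln n))"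
    using assms by (simp add: powr_def)
  also have "Complex (1/2) t * of_real (ln n) = Complex (ln n / 2) (t * ln n)"
    by (simp add: complex_eq_iff)
  also have "exp \<dots> = of_real (exp (ln n / 2)) * cis (t * ln n)"
    by (simp add: exp_eq_polar)
  also have "exp (ln n / 2) = sqrt n"
    using assms by (simp add: powr_def flip: powr_half_sqrt)
  finally show ?thesis using assms by (simp add: field_simps cis_inverse[symmetric])
qed

definition partial_sum_bound :: "real \<Rightarrow> real" where
  "partial_sum_bound \<tau> = 1.89725 * \<tau> powr (1/6) * ln \<tau> + 9.89044 * \<tau> powr (1/6)"

lemma fourth_root_le_partial_sum_bound:
  fixes \<tau> :: real
  assumes "648 \<le> \<tau>" "\<tau> \<le> 2^60"
  shows "2 * sqrt (sqrt \<tau>) \<le> partial_sum_bound \<tau>"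
proof -
  have "0 < \<tau>" using assms(1) by simp
  define X where "X = \<tau> powr (1/12)"
  have "0 < X" using \<open>0 < \<tau>\<close> by (simp add: X_def)
  have ln_X: "ln X = ln \<tau> / 12" using \<open>0 < \<tau>\<close> by (simp add: X_def ln_powr)
  have key: "2 * X \<le> 189725/100000 * ln \<tau> + 989044/100000"
  proof -
    have "ln \<tau> \<le> ln (2^60)" using assms(2) \<open>0 < \<tau>\<close> by simp
    then have "ln X \<le> ln (2^5)" using ln_X ln_realpow[of 2 60] ln_realpow[of 2 5] by simp
    then have "X \<le> 32" using \<open>0 < X\<close> by simp
    consider "X \<le> 4" | "4 < X" "X \<le> 16" | "16 < X" by linarith
    then show ?thesis
    proof cases
      case 1
      moreover have "0 \<le> ln \<tau>" using assms(1) by simp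
      ultimately show ?thesis by linarith
    next
      case 2
      then have "ln (2^2) \<le> ln X" using \<open>0 < X\<close> by simp
      then have "16 \<le> ln \<tau>" using ln_X ln2_ge_two_thirds ln_realpow[of 2 2] by simp
      then show ?thesis using 2 by linarith
    next
      case 3
      then have "ln (2^4) \<le> ln X" using \<open>0 < X\<close> by simp
      then have "32 \<le> ln \<tau>" using ln_X ln2_ge_two_thirds ln_realpow[of 2 4] by simp
      then show ?thesis using \<open>X \<le> 32\<close> by linarith
    qed
  qed
  have "sqrt (sqrt \<tau>) = \<tau> powr (1/6) * X"
    using \<open>0 < \<tau>\<close> by (simp add: X_def powr_half_sqrt[symmetric] powr_powr powr_add[symmetric])
  then have "2 * sqrt (sqrt \<tau>) = \<tau> powr (1/6) * (2 * X)" by simp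
  also have "\<dots> \<le> \<tau> powr (1/6) * (189725/100000 * ln \<tau> + 989044/100000)"
    using key by (intro mult_left_mono) auto
  also have "\<dots> = partial_sum_bound \<tau>"
    by (simp add: partial_sum_bound_def algebra_simps)
  finally show ?thesis .
qed

lemma norm_partial_sum_le_dyadic:
  fixes s t :: real and m N J :: nat
  assumes "1000 \<le> s" "s^3 = t" "64 * s \<le> m" "2*pi * real N ^ 2 \<le> t" "N \<le> m * 2^J"
  shows "cmod (\<Sum>n=1..N. of_real (1 / sqrt n) * cis (- t * ln n)) \<le> 2 * sqrt m + real J * (5 * sqrt s)"
proof -
  define f where "f n = of_real (1 / sqrt n) * cis (- t * ln n)" for n :: nat
  have "{1..N} = {1..min N m} \<union> {m<..min N (m * 2^J)}" using assms(5) by auto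
  then have "(\<Sum>n=1..N. f n) = (\<Sum>n=1..min N m. f n) + (\<Sum>n\<in>{m<..min N (m * 2^J)}. f n)"
    by (simp only:) (rule sum.union_disjoint, auto)
  then have "cmod (\<Sum>n=1..N. f n)
      \<le> cmod (\<Sum>n=1..min N m. f n) + cmod (\<Sum>n\<in>{m<..min N (m * 2^J)}. f n)"
    by (simp only: norm_triangle_ineq)
  also have "\<dots> \<le> 2 * sqrt m + real J * (5 * sqrt s)"
  proof (rule add_mono)
    have "cmod (\<Sum>n=1..min N m. f n) \<le> 2 * sqrt (min N m)"
      unfolding f_def by (rule norm_partial_sum_le_two_sqrt)
    also have "\<dots> \<le> 2 * sqrt m" by simp
    finally show "cmod (\<Sum>n=1..min N m. f n) \<le> 2 * sqrt m" .
    show "cmod (\<Sum>n\<in>{m<..min N (m * 2^J)}. f n) \<le> real J * (5 * sqrt s)"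
    proof (rule norm_sum_dyadic_le)
      show "norm (\<Sum>n\<in>{M<..min N (2 * M)}. f n) \<le> 5 * sqrt s" if "m \<le> M" "M < N" for M
      proof -
        have "2*pi * real M ^ 2 \<le> 2*pi * real N ^ 2" using that by (intro mult_left_mono) auto
        then have "2*pi * real M ^ 2 \<le> t" using assms(4) by linarith
        then show ?thesis
          unfolding f_def using that assms(1-3) by (intro weighted_dyadic_block_bound) auto
      qed
    qed (use assms(1) in simp)
  qed
  finally show ?thesis unfolding f_def .
qed

lemma doubling_exponent_bound:
  fixes \<tau> :: real and m J :: nat
  assumes "0 < \<tau>" "64 * \<tau> powr (1/3) \<le> m" "real m * 2^J < sqrt \<tau>"
  shows "real J + 6 < ln \<tau> / 4"
proof -
  have "sqrt \<tau> = \<tau> powr (1/3) * \<tau> powr (1/6)"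
    using assms(1) by (simp add: powr_half_sqrt[symmetric] powr_add[symmetric])
  moreover have "\<tau> powr (1/3) * 2^(J + 6) \<le> real m * 2^J"
    using mult_right_mono[OF assms(2), of "2^J"] by (simp add: power_add mult_ac)
  ultimately have "\<tau> powr (1/3) * 2^(J + 6) < \<tau> powr (1/3) * \<tau> powr (1/6)"
    using assms(3) by linarith
  then have "2^(J + 6) < \<tau> powr (1/6)" using assms(1) by simp
  then have "ln (2^(J + 6)) < ln (\<tau> powr (1/6))"
    using assms(1) by (subst ln_less_cancel_iff) auto
  then have "real (J + 6) * ln 2 < ln \<tau> / 6" using assms(1) by (simp add: ln_realpow ln_powr)
  moreover have "real (J + 6) * (2/3) \<le> real (J + 6) * ln 2"
    using ln2_ge_two_thirds by (intro mult_left_mono) auto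
  ultimately show ?thesis by simp
qed

lemma least_doubling_exponent_bound:
  fixes \<tau> :: real and m N :: nat
  assumes "0 < \<tau>" "40 \<le> ln \<tau>" "64 * \<tau> powr (1/3) \<le> m" "real N \<le> sqrt \<tau>"
  shows "real (LEAST k. N \<le> m * 2^k) \<le> ln \<tau> / 4 - 5"
proof (cases "LEAST k. N \<le> m * 2^k")
  case (Suc j)
  then have "\<not> N \<le> m * 2^j" using not_less_Least[of j "\<lambda>k. N \<le> m * 2^k"] by simp
  then have "real (m * 2^j) < real N" by (simp only: of_nat_less_iff not_le)
  then have "real m * 2^j < sqrt \<tau>" using assms(4) by simp
  then have "real j + 6 < ln \<tau> / 4" using assms(1,3) by (intro doubling_exponent_bound)
  then show ?thesis using Suc by simp
qed (use assms(2) in simp)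

lemma sqrt_cube_root_le:
  fixes \<tau> :: real
  assumes "0 < \<tau>"
  shows "sqrt ((2*pi*\<tau>) powr (1/3)) \<le> 1.36 * \<tau> powr (1/6)"
proof -
  have "sqrt ((2*pi*\<tau>) powr (1/3)) = (2*pi) powr (1/6) * \<tau> powr (1/6)"
    using assms by (simp add: powr_half_sqrt[symmetric] powr_powr powr_mult)
  moreover have "(2*pi) powr (1/6) \<le> 1.36"
  proof -
    have "((2*pi) powr (1/6))^6 = 2*pi" by (simp flip: powr_realpow add: powr_powr)
    also have "\<dots> \<le> 1.36^6"
    proof -
      have "(1.36::real)^6 = 1544804416 / 244140625" by (simp add: power_divide)
      moreover have "pi \<le> 63/20" using pi_approx(2) by simp
      ultimately show ?thesis by linarith
    qed
    finally show ?thesis using power_mono_iff[of "(2*pi) powr (1/6)" "1.36::real" 6] by simp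
  qed
  then have "(2*pi) powr (1/6) * \<tau> powr (1/6) \<le> 1.36 * \<tau> powr (1/6)"
    by (intro mult_right_mono) auto
  ultimately show ?thesis by simp
qed

lemma dyadic_bound_le_partial_sum_bound:
  fixes \<tau> s :: real and m J :: nat
  assumes "40 \<le> ln \<tau>" "1000 \<le> s" "m \<le> 64 * s + 1"
    and "sqrt s \<le> 1.36 * \<tau> powr (1/6)" "real J \<le> ln \<tau> / 4 - 5"
  shows "2 * sqrt m + real J * (5 * sqrt s) \<le> partial_sum_bound \<tau>"
proof -
  have "sqrt m \<le> sqrt 65 * sqrt s"
    using assms(2,3) by (simp flip: real_sqrt_mult add: real_sqrt_le_mono)
  moreover have "sqrt 65 \<le> (8.0625::real)" by (rule real_le_lsqrt) (simp_all add: power2_eq_square)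
  then have "sqrt 65 * sqrt s \<le> 8.0625 * sqrt s" using assms(2) by (intro mult_right_mono) auto
  ultimately have "2 * sqrt m \<le> 16.125 * sqrt s" by simp
  moreover have "real J * (5 * sqrt s) \<le> (ln \<tau> / 4 - 5) * (5 * sqrt s)"
    using assms(2,5) by (intro mult_right_mono) auto
  ultimately have "2 * sqrt m + real J * (5 * sqrt s) \<le> (16.125 + 5 * (ln \<tau> / 4 - 5)) * sqrt s"
    by (simp add: algebra_simps)
  also have "\<dots> \<le> (16.125 + 5 * (ln \<tau> / 4 - 5)) * (1.36 * \<tau> powr (1/6))"
    using assms(1,4) by (intro mult_left_mono) auto
  also have "\<dots> = ((16.125 + 5 * (ln \<tau> / 4 - 5)) * 1.36) * \<tau> powr (1/6)"
    by (simp only: mult_ac)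
  also have "\<dots> \<le> (1.89725 * ln \<tau> + 9.89044) * \<tau> powr (1/6)"
    using assms(1) by (intro mult_right_mono) auto
  also have "\<dots> = partial_sum_bound \<tau>"
    by (simp add: partial_sum_bound_def algebra_simps)
  finally show ?thesis .
qed

lemma norm_partial_sum_le_large_tau:
  fixes t :: real and N :: nat
  assumes "0 < t" "2^60 < t / (2*pi)" "real N \<le> sqrt (t / (2*pi))"
  shows "cmod (\<Sum>n=1..N. of_real (1 / sqrt n) * cis (- t * ln n)) \<le> partial_sum_bound (t / (2*pi))"
proof -
  define \<tau> where "\<tau> = t / (2*pi)"
  have "0 < \<tau>" "t = 2*pi*\<tau>" using assms(2) by (simp_all add: \<tau>_def)
  define s where "s = t powr (1/3)"
  have "s^3 = t" using assms(1) by (simp add: s_def powr_powr flip: powr_numeral)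
  have "1000 \<le> s"
  proof -
    have "(1000::real)^3 \<le> 2^60" by simp
    also have "\<dots> \<le> \<tau>" using assms(2) by (simp add: \<tau>_def)
    also have "\<dots> \<le> t" using \<open>0 < \<tau>\<close> \<open>t = 2*pi*\<tau>\<close> pi_gt3 by simp
    finally have "1000^3 \<le> s^3" using \<open>s^3 = t\<close> by simp
    moreover have "0 \<le> s" by (simp add: s_def)
    ultimately show ?thesis using power_mono_iff[of 1000 s 3] by simp
  qed
  define m where "m = nat \<lceil>64 * s\<rceil>"
  have "64 * s \<le> m" "m \<le> 64 * s + 1" using \<open>1000 \<le> s\<close> by (simp_all add: m_def)
  have "real N ^ 2 \<le> \<tau>" using power_mono[OF assms(3), of 2] \<open>0 < \<tau>\<close> by (simp add: \<tau>_def)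
  then have "2*pi * real N ^ 2 \<le> t" using \<open>t = 2*pi*\<tau>\<close> by simp
  define J where "J = (LEAST k. N \<le> m * 2^k)"
  have "1 \<le> m" using \<open>64 * s \<le> m\<close> \<open>1000 \<le> s\<close> by linarith
  then have "2^N \<le> m * 2^N" by simp
  then have "N \<le> m * 2^N" using less_exp[of N] by linarith
  then have "N \<le> m * 2^J" unfolding J_def by (rule LeastI)
  have "40 \<le> ln \<tau>"
  proof -
    have "ln (2^60) \<le> ln \<tau>" using assms(2) by (simp add: \<tau>_def)
    then show ?thesis using ln_realpow[of 2 60] ln2_ge_two_thirds by simp
  qed
  moreover have "64 * \<tau> powr (1/3) \<le> m"
  proof -
    have "\<tau> powr (1/3) \<le> s"
      unfolding s_def \<open>t = 2*pi*\<tau>\<close> using \<open>0 < \<tau>\<close> pi_gt3 by (intro powr_mono2) auto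
    then show ?thesis using \<open>64 * s \<le> m\<close> by linarith
  qed
  ultimately have "real J \<le> ln \<tau> / 4 - 5"
    unfolding J_def using \<open>0 < \<tau>\<close> assms(3) by (intro least_doubling_exponent_bound) (auto simp: \<tau>_def)
  have "cmod (\<Sum>n=1..N. of_real (1 / sqrt n) * cis (- t * ln n)) \<le> 2 * sqrt m + real J * (5 * sqrt s)"
    by (rule norm_partial_sum_le_dyadic) fact+
  also have "\<dots> \<le> partial_sum_bound \<tau>"
  proof (rule dyadic_bound_le_partial_sum_bound)
    show "sqrt s \<le> 1.36 * \<tau> powr (1/6)"
      unfolding s_def \<open>t = 2*pi*\<tau>\<close> using \<open>0 < \<tau>\<close> by (rule sqrt_cube_root_le)
  qed fact+
  finally show ?thesis by (simp add: \<tau>_def)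
qed

lemma norm_partial_sum_le:
  fixes t :: real and N :: nat
  assumes "0 < t" "648 \<le> t / (2*pi)" "real N \<le> sqrt (t / (2*pi))"
  shows "cmod (\<Sum>n=1..N. of_real (1 / sqrt n) * cis (- t * ln n)) \<le> partial_sum_bound (t / (2*pi))"
proof (cases "t / (2*pi) \<le> 2^60")
  case True
  have "cmod (\<Sum>n=1..N. of_real (1 / sqrt n) * cis (- t * ln n)) \<le> 2 * sqrt N"
    by (rule norm_partial_sum_le_two_sqrt)
  also have "\<dots> \<le> 2 * sqrt (sqrt (t / (2*pi)))" using assms(3) by simp
  also have "\<dots> \<le> partial_sum_bound (t / (2*pi))"
    using assms(2) True by (rule fourth_root_le_partial_sum_bound)
  finally show ?thesis .
qed (use assms norm_partial_sum_le_large_tau in auto)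

theorem proposition23:
  fixes t :: real
  assumes "t > 0"
    and "t / (2 * pi) \<ge> 648"
  shows "cmod (\<Sum>n\<in>{n::nat. 1 \<le> n \<and> real n \<le> (t / (2 * pi)) powr (1/2)}.
            1 / (of_nat n powr (Complex (1/2) t)))
         \<le> 1.89725 * (t / (2 * pi)) powr (1/6) * ln (t / (2 * pi))
           + 9.89044 * (t / (2 * pi)) powr (1/6)"
proof -
  define \<tau> where "\<tau> = t / (2 * pi)"
  define N where "N = nat \<lfloor>sqrt \<tau>\<rfloor>"
  have "0 < \<tau>" using assms(2) by (simp add: \<tau>_def)
  have N_iff: "real n \<le> sqrt \<tau> \<longleftrightarrow> n \<le> N" for n
  proof
    show "n \<le> N" if "real n \<le> sqrt \<tau>" unfolding N_def using that by (rule le_nat_floor)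
    assume "n \<le> N"
    then have "real n \<le> real N" by simp
    also have "\<dots> \<le> sqrt \<tau>" unfolding N_def using \<open>0 < \<tau>\<close> by (intro of_nat_floor) simp
    finally show "real n \<le> sqrt \<tau>" .
  qed
  have "\<tau> powr (1/2) = sqrt \<tau>" using \<open>0 < \<tau>\<close> by (simp add: powr_half_sqrt)
  then have "{n::nat. 1 \<le> n \<and> real n \<le> \<tau> powr (1/2)} = {1..N}" by (auto simp: N_iff)
  moreover have "real N \<le> sqrt \<tau>" using N_iff by simp
  ultimately show ?thesis
    using norm_partial_sum_le[OF assms(1,2), of N]
    by (simp add: \<tau>_def inverse_nat_powr_critical_line partial_sum_bound_def)
qed

end
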